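(* Let $q=p_1\otimes\cdots\otimes p_k\in B_{\lambda_1}\otimes\cdots\otimes B_{\lambda_k}$ and $1\le i\le n+1$. Let $l\ge\lambda_1+\cdots+\lambda_k$ be large enough that $T_l(q)=T_\infty(q)$, put $v_0=u_l$ and define $v_j$ recursively by $v_{j-1}\otimes p_j\simeq p'_j\otimes v_j$. Then $$\rho_i(q)-\rho_i(T_\infty(q))=\sum_{j=1}^k Q_i(v_{j-1}\otimes p_j).$$
   Context: Fix $n\ge1$. For $l\ge1$ let $B_l=\{x=(x_1,\dots,x_{n+1})\in\mathbb Z_{\ge0}^{n+1}: \sum_i x_i=l\}$ and $u_l=(l,0,\dots,0)\in B_l$. Indices of $x$ are read modulo $n+1$. For $x\in B_l,y\in B_m$ and $i\in\mathbb Z$ put $Q_i(x\otimes y)=\min_{1\le k\le n+1}\big(\sum_{j=1}^{k-1}x_{i+j}+\sum_{j=k+1}^{n+1}y_{i+j}\big)$ (so $Q_{n+1}=Q_0$) and $H(x\otimes y)=\min(l,m)-Q_0(x\otimes y)$. The combinatorial $R$ is the map $B_l\otimes B_m\to B_m\otimes B_l$, $x\otimes y\mapsto\tilde y\otimes\tilde x$, $\tilde x_i=x_i+Q_i-Q_{i-1}$, $\tilde y_i=y_i+Q_{i-1}-Q_i$ ($Q_j=Q_j(x\otimes y)$); write $x\otimes y\simeq\tilde y\otimes\tilde x$, and extend $\simeq$ to tensor products by applying $R$ to adjacent factors. Box-ball system: a state is $p=p_1\otimes\cdots\otimes p_L\in B_{\lambda_1}\otimes\cdots\otimes B_{\lambda_L}$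 ($\lambda_j\ge1$). For $l\ge1$ let $v_0=u_l$ and recursively $v_{j-1}\otimes p_j\simeq p'_j\otimes v_j$ ($1\le j\le L$); then $T_l(p)=p'_1\otimes\cdots\otimes p'_L$. For all sufficiently large $l$, $T_l(p)$ is independent of $l$; this is $T_\infty(p)$. Writing $T_\infty^t(p)=p^t_1\otimes\cdots\otimes p^t_L$, $p^t_j=(x^t_{j,1},\dots,x^t_{j,n+1})$, define for $0\le k\le L$, $1\le d\le n+1$: $\rho_{k,d}(p)=\sum_{j=1}^k(x^0_{j,2}+\cdots+x^0_{j,d})+\sum_{t\ge1}\sum_{j=1}^k(x^t_{j,2}+\cdots+x^t_{j,n+1})$ (a finite sum), and $\rho_{k,0}(p)=\rho_{k,n+1}(p)-(\lambda_1+\cdots+\lambda_k)$. For a state $q$ of length $k$ write $\rho_d(q)=\rho_{k,d}(q)$. *)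

theory Defs
  imports Main
begin

text \<open>An element x of B_l (for fixed n) is a list of naturals of length n+1 with sum l.
  ent n x i is the component x_i, the index i being read modulo n+1 (1-based).\<close>

definition inB :: "nat \<Rightarrow> nat \<Rightarrow> nat list \<Rightarrow> bool" where
  "inB n l x \<longleftrightarrow> length x = n + 1 \<and> sum_list x = l"

definition ent :: "nat \<Rightarrow> nat list \<Rightarrow> int \<Rightarrow> int" where
  "ent n x i = int (x ! nat ((i - 1) mod int (n + 1)))"

definition uvec :: "nat \<Rightarrow> nat \<Rightarrow> nat list" where
  "uvec n l = l # replicate n 0"

definition Qf :: "nat \<Rightarrow> int \<Rightarrow> nat list \<Rightarrow> nat list \<Rightarrow> int" where
  "Qf n i x y = Min ((\<lambda>k. (\<Sum>j\<in>{1..k-1}. ent n x (i + j)) + (\<Sum>j\<in>{k+1..int n + 1}. ent n y (i + j)))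
                       ` {1..int n + 1})"

text \<open>Combinatorial R: x \<otimes> y \<mapsto> ytilde \<otimes> xtilde, returned as the pair (ytilde, xtilde).\<close>
definition Rmap :: "nat \<Rightarrow> nat list \<Rightarrow> nat list \<Rightarrow> nat list \<times> nat list" where
  "Rmap n x y =
    (map (\<lambda>m. nat (ent n y (int m) + Qf n (int m - 1) x y - Qf n (int m) x y)) [1..<n+2],
     map (\<lambda>m. nat (ent n x (int m) + Qf n (int m) x y - Qf n (int m - 1) x y)) [1..<n+2])"

text \<open>Carrier sweep: given v_0 and p_1..p_L, returns (p'_1..p'_L, [v_0, v_1, ..., v_L]),
  where v_{j-1} \<otimes> p_j \<simeq> p'_j \<otimes> v_j.\<close>
fun sweep :: "nat \<Rightarrow> nat list \<Rightarrow> nat list list \<Rightarrow> nat list list \<times> nat list list" where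
  "sweep n v [] = ([], [v])"
| "sweep n v (p # ps) =
     (let (p', v') = Rmap n v p; (out, vs) = sweep n v' ps in (p' # out, v # vs))"

definition Tl :: "nat \<Rightarrow> nat \<Rightarrow> nat list list \<Rightarrow> nat list list" where
  "Tl n l p = fst (sweep n (uvec n l) p)"

definition carriers :: "nat \<Rightarrow> nat \<Rightarrow> nat list list \<Rightarrow> nat list list" where
  "carriers n l p = snd (sweep n (uvec n l) p)"

definition Tinf :: "nat \<Rightarrow> nat list list \<Rightarrow> nat list list" where
  "Tinf n p = (SOME r. \<exists>L. \<forall>l\<ge>L. Tl n l p = r)"

text \<open>rho_{k,d}(p) for 1 \<le> d \<le> n+1; the sum over t \<ge> 1 is taken over the (finite) set of t
  with nonzero summand.\<close>
definition rho :: "nat \<Rightarrow> nat \<Rightarrow> nat \<Rightarrow> nat list list \<Rightarrow> int" where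
  "rho n k d p =
     (let g = (\<lambda>t. \<Sum>j\<in>{1..k}. \<Sum>c\<in>{2..n+1}. ent n (((Tinf n ^^ t) p) ! (j - 1)) (int c))
      in (\<Sum>j\<in>{1..k}. \<Sum>c\<in>{2..d}. ent n (p ! (j - 1)) (int c))
         + (\<Sum>t\<in>{t. t \<ge> 1 \<and> g t \<noteq> 0}. g t))"

definition rho0 :: "nat \<Rightarrow> nat \<Rightarrow> nat list list \<Rightarrow> int" where
  "rho0 n k p = rho n k (n + 1) p - (\<Sum>j\<in>{1..k}. int (sum_list (p ! (j - 1))))"

definition rhoS :: "nat \<Rightarrow> nat \<Rightarrow> nat list list \<Rightarrow> int" where
  "rhoS n d q = rho n (length q) d q"

end

theory Submission
  imports Defs
begin

text \<open>
  The \<open>t\<close>-sum in \<open>\<rho>\<close> telescopes along the orbit of \<open>T_\<infinity>\<close>: after \<open>t\<close> time steps the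
  first \<open>t\<close> boxes contain only letters 1, so the sum is finite, and \<open>\<rho>_i(q) - \<rho>_i(T_\<infinity> q)\<close>
  splits into the local terms \<open>(p_2 + \<dots> + p_i) - (p'_2 + \<dots> + p'_i) + (p'_2 + \<dots> + p'_(n+1))\<close>,
  one for each site \<open>v \<otimes> p \<simeq> p' \<otimes> v'\<close>. By the definition of \<open>R\<close> the sum of \<open>p'_c - p_c\<close>
  over \<open>c > i\<close> telescopes to \<open>Q_i - Q_(n+1)\<close>, and \<open>Q_(n+1) = Q_0 = p_2 + \<dots> + p_(n+1)\<close> as soon
  as the carrier holds at least \<open>|p|\<close> letters 1. The carrier \<open>u_l\<close>, \<open>l \<ge> \<Sum>\<lambda>\<close>, starts with
  enough of them and loses at most \<open>|p|\<close> of them at each site; the same bound shows that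
  \<open>T_l = T_\<infinity>\<close> for all such \<open>l\<close>, which is what allows iterating \<open>T_\<infinity>\<close>.
\<close>

section \<open>The energies \<open>Q_i\<close>\<close>

definition Qterm :: "nat \<Rightarrow> int \<Rightarrow> nat list \<Rightarrow> nat list \<Rightarrow> int \<Rightarrow> int" where
  "Qterm n i x y k = (\<Sum>j\<in>{1..k-1}. ent n x (i + j)) + (\<Sum>j\<in>{k+1..int n + 1}. ent n y (i + j))"

lemma Qf_eq_Min_Qterm: "Qf n i x y = Min (Qterm n i x y ` {1..int n + 1})"
  unfolding Qf_def Qterm_def by simp

lemma Qf_le_Qterm: "1 \<le> k \<Longrightarrow> k \<le> int n + 1 \<Longrightarrow> Qf n i x y \<le> Qterm n i x y k"
  unfolding Qf_eq_Min_Qterm by (rule Min_le) auto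

lemma Qf_attained: "\<exists>k. 1 \<le> k \<and> k \<le> int n + 1 \<and> Qf n i x y = Qterm n i x y k"
proof -
  have "Qf n i x y \<in> Qterm n i x y ` {1..int n + 1}"
    unfolding Qf_eq_Min_Qterm by (rule Min_in) auto
  then show ?thesis by auto
qed

lemma Qf_boundedI:
  "(\<And>k. 1 \<le> k \<Longrightarrow> k \<le> int n + 1 \<Longrightarrow> b \<le> Qterm n i x y k) \<Longrightarrow> b \<le> Qf n i x y"
  unfolding Qf_eq_Min_Qterm by (rule Min.boundedI) auto

lemma ent_eq_nth: "ent n x i = int (x ! nat ((i - 1) mod (int n + 1)))"
  unfolding ent_def by (simp only: of_nat_add of_nat_1)

lemma ent_nonneg: "0 \<le> ent n x i"
  by (simp add: ent_eq_nth)

lemma Qterm_nonneg: "0 \<le> Qterm n i x y k"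
  unfolding Qterm_def by (intro add_nonneg_nonneg sum_nonneg) (auto simp: ent_nonneg)

lemma Qf_nonneg: "0 \<le> Qf n i x y"
  by (rule Qf_boundedI) (rule Qterm_nonneg)

lemma ent_add_period: "ent n x (a + (int n + 1)) = ent n x a"
proof -
  have "(a + (int n + 1) - 1) mod (int n + 1) = ((a - 1) + (int n + 1)) mod (int n + 1)"
    by (rule arg_cong[where f="\<lambda>t. t mod (int n + 1)"]) simp
  also have "\<dots> = (a - 1) mod (int n + 1)" by (rule mod_add_self2)
  finally show ?thesis unfolding ent_eq_nth by simp
qed

lemma ent_mod_period: "ent n x i = ent n x ((i - 1) mod (int n + 1) + 1)"
proof -
  have "((i - 1) mod (int n + 1) + 1 - 1) mod (int n + 1) = (i - 1) mod (int n + 1) mod (int n + 1)"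
    by (rule arg_cong[where f="\<lambda>t. t mod (int n + 1)"]) simp
  also have "\<dots> = (i - 1) mod (int n + 1)" by (rule mod_mod_trivial)
  finally show ?thesis unfolding ent_eq_nth by simp
qed

lemma ent_eq_ent_1: "(i - 1) mod (int n + 1) = 0 \<Longrightarrow> ent n x i = ent n x 1"
  using ent_mod_period[of n x i] by simp

lemma Qf_add_period: "Qf n (i + (int n + 1)) x y = Qf n i x y"
proof -
  have "\<And>j. ent n x (i + (int n + 1) + j) = ent n x (i + j)"
       "\<And>j. ent n y (i + (int n + 1) + j) = ent n y (i + j)"
    using ent_add_period[of n _ "i + _"] by (simp_all add: ac_simps)
  then show ?thesis unfolding Qf_def by simp
qed

lemma Qf_period_eq_Qf_0: "Qf n (int n + 1) x y = Qf n 0 x y"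
  using Qf_add_period[of n 0 x y] by simp

lemma sum_int_ivl_shift:
  "(\<Sum>j\<in>{a..b}. f (c + j)) = (\<Sum>j\<in>{a+1..b+1}. f (c - 1 + j))" for f :: "int \<Rightarrow> int"
  by (rule sum.reindex_bij_witness[of _ "\<lambda>j. j - 1" "\<lambda>j. j + 1"]) auto

lemma sum_int_ivl_last:
  "a \<le> b + 1 \<Longrightarrow> (\<Sum>j\<in>{a..b+1}. h j) = (\<Sum>j\<in>{a..b}. h j) + h (b + 1)" for h :: "int \<Rightarrow> int"
proof -
  assume "a \<le> b + 1"
  then have "{a..b+1} = insert (b+1) {a..b}" by auto
  then show ?thesis by simp
qed

lemma sum_int_ivl_mono:
  "c \<le> a \<Longrightarrow> (\<And>j. 0 \<le> h j) \<Longrightarrow> (\<Sum>j\<in>{a..b}. h j) \<le> (\<Sum>j\<in>{c..b}. h j)" for h :: "int \<Rightarrow> int"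
  by (rule sum_mono2) auto

lemma sum_ent_period:
  assumes "length y = n + 1"
  shows "(\<Sum>j\<in>{1..int n+1}. ent n y (c + j)) = int (sum_list y)"
proof -
  let ?N = "int n + 1"
  have "(\<Sum>j\<in>{1..int n+1}. ent n y (c + j)) = (\<Sum>m\<in>{..<n+1}. int (y ! m))"
  proof (rule sum.reindex_bij_witness[of _ "\<lambda>m. (int m - c) mod ?N + 1" "\<lambda>j. nat ((c + j - 1) mod ?N)"])
    fix j assume j: "j \<in> {1..int n + 1}"
    show "int (y ! nat ((c + j - 1) mod ?N)) = ent n y (c + j)"
      unfolding ent_eq_nth by (simp add: ac_simps)
    have b1: "0 \<le> (c + j - 1) mod ?N" "(c + j - 1) mod ?N < ?N"
      by (rule pos_mod_sign, simp) (rule pos_mod_bound, simp)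
    have "(int (nat ((c + j - 1) mod ?N)) - c) mod ?N = ((c + j - 1) mod ?N - c) mod ?N"
      using b1 by simp
    also have "\<dots> = (c + j - 1 - c) mod ?N" by (rule mod_diff_left_eq)
    also have "c + j - 1 - c = j - 1" by simp
    also have "(j - 1) mod ?N = j - 1" by (rule mod_pos_pos_trivial) (use j in auto)
    finally show "(int (nat ((c + j - 1) mod ?N)) - c) mod ?N + 1 = j" by simp
    show "nat ((c + j - 1) mod ?N) \<in> {..<n + 1}"
      using b1 by (simp add: nat_less_iff)
  next
    fix m assume m: "m \<in> {..<n + 1}"
    have b2: "0 \<le> (int m - c) mod ?N" "(int m - c) mod ?N < ?N"
      by (rule pos_mod_sign, simp) (rule pos_mod_bound, simp)
    have "c + ((int m - c) mod ?N + 1) - 1 = c + (int m - c) mod ?N" by simp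
    then have "(c + ((int m - c) mod ?N + 1) - 1) mod ?N = (c + (int m - c)) mod ?N"
      by (simp only: mod_add_right_eq)
    also have "c + (int m - c) = int m" by simp
    also have "int m mod ?N = int m" by (rule mod_pos_pos_trivial) (use m in auto)
    finally show "nat ((c + ((int m - c) mod ?N + 1) - 1) mod ?N) = m" by simp
    show "(int m - c) mod ?N + 1 \<in> {1..int n + 1}"
      using b2 by simp
  qed
  also have "\<dots> = int (sum_list y)"
    using assms by (simp add: sum_list_sum_nth lessThan_atLeast0)
  finally show ?thesis .
qed

lemma sum_ent_tail_le_sum_list:
  assumes "length y = n + 1"
  shows "(\<Sum>j\<in>{2..int n+1}. ent n y (c + j)) \<le> int (sum_list y)"
proof -
  have "(\<Sum>j\<in>{2..int n+1}. ent n y (c + j)) \<le> (\<Sum>j\<in>{1..int n+1}. ent n y (c + j))"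
    by (rule sum_int_ivl_mono) (auto simp: ent_nonneg)
  then show ?thesis using sum_ent_period[OF assms] by simp
qed

lemma Qf_le_sum_list:
  assumes "length y = n + 1"
  shows "Qf n c x y \<le> int (sum_list y)"
proof -
  have "Qf n c x y \<le> Qterm n c x y 1" by (rule Qf_le_Qterm) auto
  also have "\<dots> = (\<Sum>j\<in>{2..int n+1}. ent n y (c + j))" by (simp add: Qterm_def)
  also have "\<dots> \<le> int (sum_list y)" by (rule sum_ent_tail_le_sum_list[OF assms])
  finally show ?thesis .
qed

text \<open>This makes the entries \<open>y_c + Q_(c-1) - Q_c\<close> of the image under \<open>R\<close> nonnegative, so the
  truncation \<^const>\<open>nat\<close> in \<^const>\<open>Rmap\<close> is harmless.\<close>

lemma Qf_le_Qf_pred_add_ent: "Qf n c x y \<le> Qf n (c - 1) x y + ent n y c"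
proof -
  let ?N = "int n + 1"
  obtain k where k: "1 \<le> k" "k \<le> ?N" "Qf n (c - 1) x y = Qterm n (c - 1) x y k"
    using Qf_attained by blast
  have Yc: "ent n y (c - 1 + (?N + 1)) = ent n y c"
    using ent_add_period[of n y c] by (simp add: ac_simps)
  show ?thesis
  proof (cases "k = 1")
    case True
    have "Qterm n c x y 1 = (\<Sum>j\<in>{2..?N}. ent n y (c + j))" by (simp add: Qterm_def)
    also have "\<dots> = (\<Sum>j\<in>{3..?N+1}. ent n y (c - 1 + j))"
      using sum_int_ivl_shift[of "ent n y" c 2 ?N] by simp
    also have "\<dots> \<le> (\<Sum>j\<in>{2..?N+1}. ent n y (c - 1 + j))"
      by (rule sum_int_ivl_mono) (auto simp: ent_nonneg)
    also have "\<dots> = (\<Sum>j\<in>{2..?N}. ent n y (c - 1 + j)) + ent n y (c - 1 + (?N + 1))"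
      by (rule sum_int_ivl_last) simp
    also have "\<dots> = Qterm n (c - 1) x y 1 + ent n y c" using Yc by (simp add: Qterm_def)
    finally have "Qterm n c x y 1 \<le> Qterm n (c - 1) x y 1 + ent n y c" .
    moreover have "Qf n c x y \<le> Qterm n c x y 1" by (rule Qf_le_Qterm) auto
    ultimately show ?thesis using k True by simp
  next
    case False
    then have k2: "2 \<le> k" using k by simp
    have "(\<Sum>j\<in>{1..k-2}. ent n x (c + j)) = (\<Sum>j\<in>{2..k-1}. ent n x (c - 1 + j))"
      using sum_int_ivl_shift[of "ent n x" c 1 "k - 2"] by simp
    also have "\<dots> \<le> (\<Sum>j\<in>{1..k-1}. ent n x (c - 1 + j))"
      by (rule sum_int_ivl_mono) (auto simp: ent_nonneg)
    finally have X: "(\<Sum>j\<in>{1..k-2}. ent n x (c + j)) \<le> (\<Sum>j\<in>{1..k-1}. ent n x (c - 1 + j))" .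
    have "(\<Sum>j\<in>{k..?N}. ent n y (c + j)) = (\<Sum>j\<in>{k+1..?N+1}. ent n y (c - 1 + j))"
      using sum_int_ivl_shift[of "ent n y" c k ?N] by simp
    also have "\<dots> = (\<Sum>j\<in>{k+1..?N}. ent n y (c - 1 + j)) + ent n y (c - 1 + (?N + 1))"
      by (rule sum_int_ivl_last) (use k in simp)
    finally have Y: "(\<Sum>j\<in>{k..?N}. ent n y (c + j))
        = (\<Sum>j\<in>{k+1..?N}. ent n y (c - 1 + j)) + ent n y c"
      using Yc by simp
    have "Qterm n c x y (k - 1) = (\<Sum>j\<in>{1..k-2}. ent n x (c + j)) + (\<Sum>j\<in>{k..?N}. ent n y (c + j))"
      by (simp add: Qterm_def)
    also have "\<dots> \<le> Qterm n (c - 1) x y k + ent n y c"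
      using X Y by (simp add: Qterm_def)
    finally have "Qterm n c x y (k - 1) \<le> Qterm n (c - 1) x y k + ent n y c" .
    moreover have "Qf n c x y \<le> Qterm n c x y (k - 1)" by (rule Qf_le_Qterm) (use k k2 in auto)
    ultimately show ?thesis using k by simp
  qed
qed

text \<open>Every candidate \<open>k\<close> of the minimum that sees a raised entry is dominated by \<open>k = 1\<close>.\<close>

lemma Qf_increase_left:
  assumes ge: "\<And>i. ent n x i \<le> ent n x' i"
    and big: "\<And>i. ent n x' i \<noteq> ent n x i \<Longrightarrow> (\<Sum>j\<in>{2..int n+1}. ent n y (c + j)) \<le> ent n x i"
  shows "Qf n c x' y = Qf n c x y"
proof (rule antisym)
  show "Qf n c x y \<le> Qf n c x' y"
  proof (rule Qf_boundedI)
    fix k :: int assume k: "1 \<le> k" "k \<le> int n + 1"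
    have "Qf n c x y \<le> Qterm n c x y k" by (rule Qf_le_Qterm) (use k in auto)
    also have "\<dots> \<le> Qterm n c x' y k" unfolding Qterm_def by (simp add: sum_mono ge)
    finally show "Qf n c x y \<le> Qterm n c x' y k" .
  qed
next
  obtain k where k: "1 \<le> k" "k \<le> int n + 1" "Qf n c x y = Qterm n c x y k"
    using Qf_attained by blast
  show "Qf n c x' y \<le> Qf n c x y"
  proof (cases "\<forall>j\<in>{1..k-1}. ent n x' (c + j) = ent n x (c + j)")
    case True
    then have "Qterm n c x' y k = Qterm n c x y k" unfolding Qterm_def by simp
    moreover have "Qf n c x' y \<le> Qterm n c x' y k" by (rule Qf_le_Qterm) (use k in auto)
    ultimately show ?thesis using k by simp
  next
    case False
    then obtain j0 where j0: "j0 \<in> {1..k-1}" "ent n x' (c + j0) \<noteq> ent n x (c + j0)" by blast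
    have "Qf n c x' y \<le> Qterm n c x' y 1" by (rule Qf_le_Qterm) auto
    also have "\<dots> = (\<Sum>j\<in>{2..int n+1}. ent n y (c + j))" by (simp add: Qterm_def)
    also have "\<dots> \<le> ent n x (c + j0)" using big[OF j0(2)] .
    also have "\<dots> \<le> (\<Sum>j\<in>{1..k-1}. ent n x (c + j))"
      by (rule member_le_sum[OF j0(1)]) (auto simp: ent_nonneg)
    also have "\<dots> \<le> Qterm n c x y k" unfolding Qterm_def by (simp add: sum_nonneg ent_nonneg)
    finally show ?thesis using k by simp
  qed
qed

definition balls_upto :: "nat \<Rightarrow> nat \<Rightarrow> nat list \<Rightarrow> int" where
  "balls_upto n d y = (\<Sum>c\<in>{2..d}. ent n y (int c))"

lemma sum_int_of_nat_ivl: "(\<Sum>c\<in>{a..b}. f (int c)) = (\<Sum>j\<in>{int a..int b}. (f j :: int))"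
proof -
  have "(\<Sum>j\<in>{int a..int b}. f j) = (\<Sum>j\<in>int ` {a..b}. f j)"
    by (simp add: image_int_atLeastAtMost)
  also have "\<dots> = (\<Sum>c\<in>{a..b}. f (int c))" by (subst sum.reindex) (auto simp: inj_on_def)
  finally show ?thesis by simp
qed

lemma balls_upto_all: "balls_upto n (n + 1) y = (\<Sum>j\<in>{2..int n+1}. ent n y j)"
  unfolding balls_upto_def sum_int_of_nat_ivl by (simp only: of_nat_add of_nat_1 of_nat_numeral)

lemma balls_upto_split:
  assumes "1 \<le> d" "d \<le> e"
  shows "balls_upto n e y = balls_upto n d y + (\<Sum>c\<in>{Suc d..e}. ent n y (int c))"
proof -
  have "{2..e} = {2..d} \<union> {Suc d..e}" using assms by auto
  then show ?thesis unfolding balls_upto_def by (simp add: sum.union_disjoint)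
qed

text \<open>The minimum is attained at \<open>k = 1\<close>: every other candidate contains \<open>x_1 \<ge> |y|\<close>.\<close>

lemma Qf_0_large_carrier:
  assumes "length y = n + 1" and "int (sum_list y) \<le> ent n x 1"
  shows "Qf n 0 x y = balls_upto n (n + 1) y"
  unfolding balls_upto_all
proof (rule antisym)
  have "Qf n 0 x y \<le> Qterm n 0 x y 1" by (rule Qf_le_Qterm) auto
  then show "Qf n 0 x y \<le> (\<Sum>j\<in>{2..int n+1}. ent n y j)" by (simp add: Qterm_def)
next
  show "(\<Sum>j\<in>{2..int n+1}. ent n y j) \<le> Qf n 0 x y"
  proof (rule Qf_boundedI)
    fix k :: int assume k: "1 \<le> k" "k \<le> int n + 1"
    show "(\<Sum>j\<in>{2..int n+1}. ent n y j) \<le> Qterm n 0 x y k"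
    proof (cases "k = 1")
      case True then show ?thesis by (simp add: Qterm_def)
    next
      case False
      have "(\<Sum>j\<in>{2..int n+1}. ent n y j) \<le> int (sum_list y)"
        using sum_ent_tail_le_sum_list[OF assms(1), of 0] by simp
      also have "\<dots> \<le> ent n x (0 + 1)" using assms(2) by simp
      also have "\<dots> \<le> (\<Sum>j\<in>{1..k-1}. ent n x (0 + j))"
        by (rule member_le_sum) (use k False in \<open>auto simp: ent_nonneg\<close>)
      also have "\<dots> \<le> Qterm n 0 x y k" unfolding Qterm_def by (simp add: sum_nonneg ent_nonneg)
      finally show ?thesis .
    qed
  qed
qed

section \<open>The combinatorial \<open>R\<close>\<close>

lemma ent_map_upt:
  "ent n (map f [1..<n+2]) i = int (f (Suc (nat ((i - 1) mod (int n + 1)))))"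
proof -
  have "0 \<le> (i - 1) mod (int n + 1)" "(i - 1) mod (int n + 1) < int n + 1"
    by (rule pos_mod_sign, simp) (rule pos_mod_bound, simp)
  then have "nat ((i - 1) mod (int n + 1)) < n + 1" by (simp add: nat_less_iff)
  then show ?thesis unfolding ent_eq_nth by (simp del: upt_Suc)
qed

lemma ent_Rmap_fst:
  assumes "1 \<le> c" "c \<le> n + 1"
  shows "ent n (fst (Rmap n x y)) (int c) = ent n y (int c) + Qf n (int c - 1) x y - Qf n (int c) x y"
proof -
  have "(int c - 1) mod (int n + 1) = int c - 1" by (rule mod_pos_pos_trivial) (use assms in auto)
  then have c: "Suc (nat ((int c - 1) mod (int n + 1))) = c" using assms by simp
  have "ent n (fst (Rmap n x y)) (int c)
      = int (nat (ent n y (int c) + Qf n (int c - 1) x y - Qf n (int c) x y))"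
    unfolding Rmap_def fst_conv ent_map_upt c ..
  also have "\<dots> = ent n y (int c) + Qf n (int c - 1) x y - Qf n (int c) x y"
    using Qf_le_Qf_pred_add_ent[of n "int c" x y] by simp
  finally show ?thesis .
qed

lemma ent_Rmap_snd: "ent n (snd (Rmap n x y)) i =
   int (nat (ent n x ((i - 1) mod (int n + 1) + 1) + Qf n ((i - 1) mod (int n + 1) + 1) x y
             - Qf n ((i - 1) mod (int n + 1)) x y))"
proof -
  have "0 \<le> (i - 1) mod (int n + 1)" by (rule pos_mod_sign) simp
  then have "int (Suc (nat ((i - 1) mod (int n + 1)))) = (i - 1) mod (int n + 1) + 1" by simp
  then show ?thesis
    unfolding Rmap_def snd_conv ent_map_upt by (simp only: add_diff_cancel_right')
qed

lemma length_Rmap_fst [simp]: "length (fst (Rmap n x y)) = n + 1"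
  by (simp add: Rmap_def del: upt_Suc)

lemma sum_telescope_pred:
  "a \<le> b \<Longrightarrow> (\<Sum>c\<in>{Suc a..b}. (f (c - 1) - f c :: int)) = f a - f b"
proof (induction b)
  case 0 then show ?case by simp
next
  case (Suc b)
  show ?case
  proof (cases "a = Suc b")
    case True then show ?thesis by simp
  next
    case False
    then have "a \<le> b" using Suc.prems by simp
    then show ?thesis using Suc.IH by (simp add: sum.cl_ivl_Suc)
  qed
qed

lemma sum_ent_Rmap_fst:
  assumes "d \<le> n + 1"
  shows "(\<Sum>c\<in>{Suc d..n+1}. ent n (fst (Rmap n x y)) (int c))
       = (\<Sum>c\<in>{Suc d..n+1}. ent n y (int c)) + Qf n (int d) x y - Qf n (int n + 1) x y"
proof -
  have eqN: "int (n + 1) = int n + 1" by simp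
  have "(\<Sum>c\<in>{Suc d..n+1}. ent n (fst (Rmap n x y)) (int c))
      = (\<Sum>c\<in>{Suc d..n+1}. ent n y (int c) + (Qf n (int (c - 1)) x y - Qf n (int c) x y))"
    by (rule sum.cong) (auto simp: ent_Rmap_fst of_nat_diff)
  also have "\<dots> = (\<Sum>c\<in>{Suc d..n+1}. ent n y (int c))
                 + (\<Sum>c\<in>{Suc d..n+1}. (Qf n (int (c - 1)) x y - Qf n (int c) x y))"
    by (rule sum.distrib)
  also have "(\<Sum>c\<in>{Suc d..n+1}. (Qf n (int (c - 1)) x y - Qf n (int c) x y))
           = Qf n (int d) x y - Qf n (int n + 1) x y"
    using sum_telescope_pred[of d "n+1" "\<lambda>c. Qf n (int c) x y"] assms unfolding eqN by simp
  finally show ?thesis by (simp only: add_diff_eq)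
qed

lemma balls_upto_Rmap_fst:
  assumes "length y = n + 1" and "int (sum_list y) \<le> ent n x 1" and "1 \<le> d" "d \<le> n + 1"
  shows "balls_upto n d y - balls_upto n d (fst (Rmap n x y)) + balls_upto n (n + 1) (fst (Rmap n x y))
       = Qf n (int d) x y"
proof -
  have "Qf n (int n + 1) x y = balls_upto n (n + 1) y"
    unfolding Qf_period_eq_Qf_0 by (rule Qf_0_large_carrier[OF assms(1,2)])
  then show ?thesis
    using sum_ent_Rmap_fst[OF assms(4), of x y]
      balls_upto_split[OF assms(3,4), of n y] balls_upto_split[OF assms(3,4), of n "fst (Rmap n x y)"]
    by simp
qed

lemma ent_Rmap_snd_1_ge:
  assumes "length y = n + 1"
  shows "ent n x 1 - int (sum_list y) \<le> ent n (snd (Rmap n x y)) 1"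
proof -
  have "ent n (snd (Rmap n x y)) 1 = int (nat (ent n x 1 + Qf n 1 x y - Qf n 0 x y))"
    using ent_Rmap_snd[of n x y 1] by simp
  then show ?thesis
    using Qf_le_sum_list[OF assms, of 0 x] Qf_nonneg[of n 1 x y] by linarith
qed

text \<open>Letter 1 plays the role of an empty place: a vacant box or carrier holds only letters 1.\<close>

definition vacant :: "nat \<Rightarrow> nat list \<Rightarrow> bool" where
  "vacant n y \<longleftrightarrow> (\<forall>i. (i - 1) mod (int n + 1) \<noteq> 0 \<longrightarrow> ent n y i = 0)"

lemma balls_upto_vacant: "vacant n y \<Longrightarrow> balls_upto n (n + 1) y = 0"
  unfolding balls_upto_def
proof (rule sum.neutral, rule ballI)
  fix c assume E: "vacant n y" and c: "c \<in> {2..n+1}"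
  have "(int c - 1) mod (int n + 1) = int c - 1" by (rule mod_pos_pos_trivial) (use c in auto)
  then have "(int c - 1) mod (int n + 1) \<noteq> 0" using c by simp
  then show "ent n y (int c) = 0" using E unfolding vacant_def by blast
qed

lemma vacantI_balls_upto: "balls_upto n (n + 1) y \<le> 0 \<Longrightarrow> vacant n y"
  unfolding vacant_def
proof (intro allI impI)
  fix i assume B: "balls_upto n (n + 1) y \<le> 0" and m: "(i - 1) mod (int n + 1) \<noteq> 0"
  let ?m = "(i - 1) mod (int n + 1)"
  have b: "0 \<le> ?m" "?m < int n + 1"
    by (rule pos_mod_sign, simp) (rule pos_mod_bound, simp)
  define c where "c = nat ?m + 1"
  have "1 \<le> ?m" using b(1) m by linarith
  then have c: "c \<in> {2..n+1}" "int c = ?m + 1" using b unfolding c_def by auto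
  have "ent n y i = ent n y (int c)" using ent_mod_period[of n y i] c by simp
  also have "\<dots> \<le> balls_upto n (n + 1) y" unfolding balls_upto_def
    by (rule member_le_sum[OF c(1)]) (auto simp: ent_nonneg)
  finally show "ent n y i = 0" using B ent_nonneg[of n y i] by simp
qed

lemma ent_uvec: "ent n (uvec n l) i = (if (i - 1) mod (int n + 1) = 0 then int l else 0)"
proof -
  let ?k = "nat ((i - 1) mod (int n + 1))"
  have b: "0 \<le> (i - 1) mod (int n + 1)" "(i - 1) mod (int n + 1) < int n + 1"
    by (rule pos_mod_sign, simp) (rule pos_mod_bound, simp)
  then have "?k < Suc n" by (simp add: nat_less_iff)
  moreover have "?k = 0 \<longleftrightarrow> (i - 1) mod (int n + 1) = 0" using b(1) by linarith
  ultimately show ?thesis unfolding ent_eq_nth uvec_def by (auto simp: nth_Cons')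
qed

lemma vacant_uvec: "vacant n (uvec n l)"
  unfolding vacant_def ent_uvec by simp

lemma ent_uvec_1: "ent n (uvec n l) 1 = int l"
  unfolding ent_uvec by simp

lemma Qf_vacant:
  assumes x: "vacant n x" and y: "vacant n y" and c: "1 \<le> c" "c \<le> int n + 1"
  shows "Qf n c x y = 0"
proof (rule antisym)
  let ?N = "int n + 1"
  have "(\<Sum>j\<in>{1..?N + 1 - c - 1}. ent n x (c + j)) = 0"
  proof (rule sum.neutral, rule ballI)
    fix j assume j: "j \<in> {1..?N + 1 - c - 1}"
    have "(c + j - 1) mod ?N = c + j - 1" by (rule mod_pos_pos_trivial) (use j c in auto)
    then have "(c + j - 1) mod ?N \<noteq> 0" using j c by simp
    then show "ent n x (c + j) = 0" using x unfolding vacant_def by blast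
  qed
  moreover have "(\<Sum>j\<in>{?N + 1 - c + 1..?N}. ent n y (c + j)) = 0"
  proof (rule sum.neutral, rule ballI)
    fix j assume j: "j \<in> {?N + 1 - c + 1..?N}"
    have "(c + j - 1) mod ?N = ((c + j - 1 - ?N) + ?N) mod ?N"
      by (rule arg_cong[where f="\<lambda>t. t mod ?N"]) simp
    also have "\<dots> = (c + j - 1 - ?N) mod ?N" by (rule mod_add_self2)
    also have "\<dots> = c + j - 1 - ?N" by (rule mod_pos_pos_trivial) (use j c in auto)
    finally have "(c + j - 1) mod ?N \<noteq> 0" using j c by simp
    then show "ent n y (c + j) = 0" using y unfolding vacant_def by blast
  qed
  ultimately have "Qterm n c x y (?N + 1 - c) = 0" unfolding Qterm_def by simp
  moreover have "Qf n c x y \<le> Qterm n c x y (?N + 1 - c)" by (rule Qf_le_Qterm) (use c in auto)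
  ultimately show "Qf n c x y \<le> 0" by simp
qed (rule Qf_nonneg)

text \<open>The balls left in the box number \<open>Q_1\<close>, whose candidate \<open>k = n + 1\<close> only sees the
  zero entries \<open>x_2, \<dots>, x_(n+1)\<close>.\<close>

lemma vacant_Rmap_fst:
  assumes x: "vacant n x" and ly: "length y = n + 1" and big: "int (sum_list y) \<le> ent n x 1"
  shows "vacant n (fst (Rmap n x y))"
proof (rule vacantI_balls_upto)
  have "balls_upto n (n + 1) (fst (Rmap n x y)) = Qf n 1 x y"
    using balls_upto_Rmap_fst[OF ly big, of 1] by (simp add: balls_upto_def)
  also have "Qf n 1 x y \<le> Qterm n 1 x y (int n + 1)" by (rule Qf_le_Qterm) auto
  also have "\<dots> = 0" unfolding Qterm_def
  proof (simp, rule sum.neutral, rule ballI)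
    fix j assume j: "j \<in> {1..int n}"
    have "(1 + j - 1) mod (int n + 1) = j" by (simp, rule mod_pos_pos_trivial) (use j in auto)
    then have "(1 + j - 1) mod (int n + 1) \<noteq> 0" using j by simp
    then show "ent n x (1 + j) = 0" using x unfolding vacant_def by blast
  qed
  finally show "balls_upto n (n + 1) (fst (Rmap n x y)) \<le> 0" .
qed

lemma vacant_Rmap_snd:
  assumes x: "vacant n x" and y: "vacant n y"
  shows "vacant n (snd (Rmap n x y))"
  unfolding vacant_def
proof (intro allI impI)
  fix i assume m: "(i - 1) mod (int n + 1) \<noteq> 0"
  let ?m = "(i - 1) mod (int n + 1)"
  have b: "0 \<le> ?m" "?m < int n + 1"
    by (rule pos_mod_sign, simp) (rule pos_mod_bound, simp)
  have q1: "Qf n (?m + 1) x y = 0" by (rule Qf_vacant[OF x y]) (use b in auto)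
  have "1 \<le> ?m" using b(1) m by linarith
  then have q2: "Qf n ?m x y = 0" by (rule Qf_vacant[OF x y]) (use b in auto)
  have "(?m + 1 - 1) mod (int n + 1) = ?m" by simp
  then have "ent n x (?m + 1) = 0" using x m unfolding vacant_def by metis
  then show "ent n (snd (Rmap n x y)) i = 0" unfolding ent_Rmap_snd q1 q2 by simp
qed

section \<open>Carrier sweeps and \<open>T_\<infinity>\<close>\<close>

definition state_size :: "nat list list \<Rightarrow> nat" where
  "state_size ps = sum_list (map sum_list ps)"

definition wf_state :: "nat \<Rightarrow> nat list list \<Rightarrow> bool" where
  "wf_state n ps \<longleftrightarrow> (\<forall>p\<in>set ps. length p = n + 1)"

lemma state_size_Cons [simp]: "state_size (p # ps) = sum_list p + state_size ps"
  by (simp add: state_size_def)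

lemma wf_state_Cons [simp]: "wf_state n (p # ps) \<longleftrightarrow> length p = n + 1 \<and> wf_state n ps"
  by (simp add: wf_state_def)

lemma sweep_Cons_eq: "sweep n v (p # ps) =
   (fst (Rmap n v p) # fst (sweep n (snd (Rmap n v p)) ps), v # snd (sweep n (snd (Rmap n v p)) ps))"
  by (simp add: split_beta Let_def)

declare sweep.simps(2) [simp del] sweep_Cons_eq [simp]

lemma length_sweep: "length (fst (sweep n v ps)) = length ps"
  by (induction ps arbitrary: v) simp_all

lemma nth_sweep:
  "j < length ps \<Longrightarrow> fst (sweep n v ps) ! j = fst (Rmap n (snd (sweep n v ps) ! j) (ps ! j))"
proof (induction ps arbitrary: v j)
  case Nil then show ?case by simp
next
  case (Cons p ps)
  then show ?case by (cases j) simp_all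
qed

lemma wf_state_sweep: "wf_state n (fst (sweep n v ps))"
  by (induction ps arbitrary: v) (simp_all add: wf_state_def)

lemma carrier_ent_1_ge_sweep:
  "wf_state n ps \<Longrightarrow> int (state_size ps) \<le> ent n v 1 \<Longrightarrow> j < length ps \<Longrightarrow>
   int (state_size (drop j ps)) \<le> ent n (snd (sweep n v ps) ! j) 1"
proof (induction ps arbitrary: v j)
  case Nil then show ?case by simp
next
  case (Cons p ps)
  show ?case
  proof (cases j)
    case 0 then show ?thesis using Cons.prems by simp
  next
    case (Suc j')
    have "int (state_size ps) \<le> ent n (snd (Rmap n v p)) 1"
      using ent_Rmap_snd_1_ge[of p n v] Cons.prems by simp
    then show ?thesis using Cons.IH[of "snd (Rmap n v p)" j'] Cons.prems Suc by simp
  qed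
qed

lemma balls_upto_sweep_nth:
  assumes wf: "wf_state n ps" and v: "int (state_size ps) \<le> ent n v 1" and j: "j < length ps"
    and d: "1 \<le> d" "d \<le> n + 1"
  shows "balls_upto n d (ps ! j) - balls_upto n d (fst (sweep n v ps) ! j)
         + balls_upto n (n + 1) (fst (sweep n v ps) ! j)
       = Qf n (int d) (snd (sweep n v ps) ! j) (ps ! j)"
proof -
  have "length (ps ! j) = n + 1" using wf j by (simp add: wf_state_def)
  moreover have "drop j ps = ps ! j # drop (Suc j) ps" by (rule Cons_nth_drop_Suc[OF j, symmetric])
  then have "int (sum_list (ps ! j)) \<le> ent n (snd (sweep n v ps) ! j) 1"
    using carrier_ent_1_ge_sweep[OF wf v j] by simp
  ultimately show ?thesis
    unfolding nth_sweep[OF j] by (rule balls_upto_Rmap_fst[OF _ _ d])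
qed

text \<open>The \<open>d\<close> extra letters 1 stay in the carrier at every site.\<close>

lemma sweep_increase_carrier:
  "wf_state n ps \<Longrightarrow>
   (\<And>i. ent n v' i = ent n v i + (if (i - 1) mod (int n + 1) = 0 then int d else 0)) \<Longrightarrow>
   int (state_size ps) \<le> ent n v 1 \<Longrightarrow> fst (sweep n v' ps) = fst (sweep n v ps)"
proof (induction ps arbitrary: v v')
  case Nil then show ?case by simp
next
  case (Cons p ps)
  have lp: "length p = n + 1" using Cons.prems by simp
  have Qeq: "Qf n c v' p = Qf n c v p" for c
  proof (rule Qf_increase_left)
    fix i
    show "ent n v i \<le> ent n v' i" using Cons.prems(2)[of i] by simp
    assume "ent n v' i \<noteq> ent n v i"
    then have "(i - 1) mod (int n + 1) = 0" using Cons.prems(2)[of i] by (auto split: if_splits)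
    then have "ent n v i = ent n v 1" by (rule ent_eq_ent_1)
    then show "(\<Sum>j\<in>{2..int n+1}. ent n p (c + j)) \<le> ent n v i"
      using sum_ent_tail_le_sum_list[OF lp, of c] Cons.prems(3) by simp
  qed
  have nn: "0 \<le> ent n v 1 + Qf n 1 v p - Qf n 0 v p"
    using Qf_le_sum_list[OF lp, of 0 v] Qf_nonneg[of n 1 v p] Cons.prems(3) by simp
  have "ent n (snd (Rmap n v' p)) i
      = ent n (snd (Rmap n v p)) i + (if (i - 1) mod (int n + 1) = 0 then int d else 0)" for i
  proof -
    let ?m = "(i - 1) mod (int n + 1)"
    have "ent n v' (?m + 1) = ent n v (?m + 1) + (if ?m = 0 then int d else 0)"
      using Cons.prems(2)[of "?m + 1"] by simp
    then show ?thesis unfolding ent_Rmap_snd using nn by (cases "?m = 0") (simp_all add: Qeq)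
  qed
  moreover have "int (state_size ps) \<le> ent n (snd (Rmap n v p)) 1"
    using ent_Rmap_snd_1_ge[OF lp, of v] Cons.prems(3) by simp
  ultimately have "fst (sweep n (snd (Rmap n v' p)) ps) = fst (sweep n (snd (Rmap n v p)) ps)"
    using Cons.IH Cons.prems(1) by simp
  moreover have "fst (Rmap n v' p) = fst (Rmap n v p)" unfolding Rmap_def by (simp add: Qeq)
  ultimately show ?case by simp
qed

lemma vacant_prefix_sweep:
  "vacant n v \<Longrightarrow> int (state_size ps) \<le> ent n v 1 \<Longrightarrow> wf_state n ps \<Longrightarrow>
   (\<forall>j < min m (length ps). vacant n (ps ! j)) \<Longrightarrow>
   (\<forall>j < min (Suc m) (length ps). vacant n (fst (sweep n v ps) ! j))"
proof (induction ps arbitrary: v m)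
  case Nil then show ?case by simp
next
  case (Cons p ps)
  have lp: "length p = n + 1" using Cons.prems by simp
  show ?case
  proof (intro allI impI)
    fix j assume j: "j < min (Suc m) (length (p # ps))"
    show "vacant n (fst (sweep n v (p # ps)) ! j)"
    proof (cases j)
      case 0
      have "vacant n (fst (Rmap n v p))"
        by (rule vacant_Rmap_fst[OF Cons.prems(1) lp]) (use Cons.prems(2) in simp)
      then show ?thesis using 0 by simp
    next
      case (Suc j')
      then obtain m' where m': "m = Suc m'" using j by (cases m) auto
      have "vacant n (snd (Rmap n v p))"
        by (rule vacant_Rmap_snd[OF Cons.prems(1)]) (use Cons.prems(4) m' in force)
      moreover have "int (state_size ps) \<le> ent n (snd (Rmap n v p)) 1"
        using ent_Rmap_snd_1_ge[OF lp, of v] Cons.prems(2) by simp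
      moreover have "\<forall>j<min m' (length ps). vacant n (ps ! j)"
      proof (intro allI impI)
        fix j assume "j < min m' (length ps)"
        then show "vacant n (ps ! j)" using Cons.prems(4)[rule_format, of "Suc j"] m' by simp
      qed
      ultimately have "\<forall>j<min (Suc m') (length ps). vacant n (fst (sweep n (snd (Rmap n v p)) ps) ! j)"
        using Cons.IH Cons.prems(3) by simp
      then show ?thesis using j Suc m' by simp
    qed
  qed
qed

lemma Tl_eq_Tl_if_le:
  assumes "wf_state n p" "state_size p \<le> l" "l \<le> l'"
  shows "Tl n l' p = Tl n l p"
  unfolding Tl_def
proof (rule sweep_increase_carrier[where d = "l' - l"])
qed (use assms in \<open>auto simp: ent_uvec\<close>)

lemma Tinf_eq_sweep:
  assumes wf: "wf_state n p" and l: "state_size p \<le> l"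
  shows "Tinf n p = fst (sweep n (uvec n l) p)"
proof -
  have "\<exists>r L. \<forall>l'\<ge>L. Tl n l' p = r"
    using Tl_eq_Tl_if_le[OF wf order.refl] by blast
  then have "\<exists>L. \<forall>l'\<ge>L. Tl n l' p = Tinf n p"
    unfolding Tinf_def by (rule someI_ex)
  then obtain L where L: "\<forall>l'\<ge>L. Tl n l' p = Tinf n p" by blast
  have "Tinf n p = Tl n (max L l) p" using L by simp
  also have "\<dots> = Tl n l p" using Tl_eq_Tl_if_le[OF wf l, of "max L l"] by simp
  finally show ?thesis by (simp add: Tl_def)
qed

lemma wf_state_funpow_Tinf:
  "wf_state n p \<Longrightarrow> wf_state n ((Tinf n ^^ t) p) \<and> length ((Tinf n ^^ t) p) = length p"
  by (induction t) (simp_all add: Tinf_eq_sweep[OF _ order.refl] wf_state_sweep length_sweep)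

lemma vacant_funpow_Tinf:
  assumes "wf_state n p" "j < t" "j < length p"
  shows "vacant n ((Tinf n ^^ t) p ! j)"
proof -
  have "\<forall>j < min t (length p). vacant n ((Tinf n ^^ t) p ! j)"
  proof (induction t)
    case 0 then show ?case by simp
  next
    case (Suc t)
    let ?p = "(Tinf n ^^ t) p"
    have wf: "wf_state n ?p" and len: "length ?p = length p"
      using wf_state_funpow_Tinf[OF assms(1)] by auto
    have "\<forall>j < min (Suc t) (length ?p). vacant n (fst (sweep n (uvec n (state_size ?p)) ?p) ! j)"
      by (rule vacant_prefix_sweep) (use Suc.IH wf len in \<open>simp_all add: vacant_uvec ent_uvec_1\<close>)
    then show ?case using Tinf_eq_sweep[OF wf order.refl] len by simp
  qed
  then show ?thesis using assms by simp
qed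

section \<open>Telescoping \<open>\<rho>\<close>\<close>

lemma sum_support_eq_sum_atLeastAtMost:
  fixes g :: "nat \<Rightarrow> int"
  assumes "\<And>t. k < t \<Longrightarrow> g t = 0"
  shows "(\<Sum>t\<in>{t. t \<ge> 1 \<and> g t \<noteq> 0}. g t) = (\<Sum>t\<in>{1..k}. g t)"
proof (rule sum.mono_neutral_left)
  show "{t. t \<ge> 1 \<and> g t \<noteq> 0} \<subseteq> {1..k}"
    using assms by (auto simp: not_less[symmetric])
qed auto

lemma rhoS_diff_Tinf:
  assumes wf: "wf_state n q"
  shows "rhoS n d q - rhoS n d (Tinf n q)
       = (\<Sum>j\<in>{1..length q}. balls_upto n d (q ! (j - 1)) - balls_upto n d (Tinf n q ! (j - 1))
                             + balls_upto n (n + 1) (Tinf n q ! (j - 1)))"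
proof -
  let ?k = "length q"
  define g where "g t = (\<Sum>j\<in>{1..?k}. balls_upto n (n + 1) ((Tinf n ^^ t) q ! (j - 1)))" for t
  define A where "A p = (\<Sum>j\<in>{1..?k}. balls_upto n d (p ! (j - 1)))" for p
  have g_vanishes: "g t = 0" if "?k < t" for t
    unfolding g_def using that by (intro sum.neutral ballI balls_upto_vacant vacant_funpow_Tinf[OF wf]) auto
  have len: "length (Tinf n q) = ?k"
    using wf_state_funpow_Tinf[OF wf, of 1] by simp
  have "rhoS n d q = A q + (\<Sum>t\<in>{t. t \<ge> 1 \<and> g t \<noteq> 0}. g t)"
    unfolding rhoS_def rho_def Let_def A_def g_def balls_upto_def by simp
  also have "\<dots> = A q + (\<Sum>t\<in>{1..?k}. g t)"
    using sum_support_eq_sum_atLeastAtMost[of ?k g] g_vanishes by simp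
  finally have rho_q: "rhoS n d q = A q + (\<Sum>t\<in>{1..?k}. g t)" .
  have "rhoS n d (Tinf n q) = A (Tinf n q) + (\<Sum>t\<in>{t. t \<ge> 1 \<and> g (Suc t) \<noteq> 0}. g (Suc t))"
    unfolding rhoS_def rho_def Let_def A_def g_def balls_upto_def len funpow_Suc_right o_apply
    by simp
  also have "\<dots> = A (Tinf n q) + (\<Sum>t\<in>{1..?k}. g (Suc t))"
    using sum_support_eq_sum_atLeastAtMost[of ?k "g \<circ> Suc"] g_vanishes by simp
  finally have rho_Tq: "rhoS n d (Tinf n q) = A (Tinf n q) + (\<Sum>t\<in>{1..?k}. g (Suc t))" .
  have "(\<Sum>t\<in>{1..?k}. g t) - (\<Sum>t\<in>{1..?k}. g (Suc t)) = g 1"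
    using sum_Suc_diff[of 1 ?k g] g_vanishes[of "Suc ?k"] by (simp add: sum_subtractf)
  then have "rhoS n d q - rhoS n d (Tinf n q) = A q - A (Tinf n q) + g 1"
    using rho_q rho_Tq by simp
  then show ?thesis
    unfolding A_def g_def by (simp add: sum.distrib sum_subtractf)
qed

theorem lemma4p5:
  fixes n l i :: nat and q :: "nat list list" and lam :: "nat list"
  assumes "n \<ge> 1"
    and "length lam = length q"
    and "\<forall>j < length q. lam ! j \<ge> 1 \<and> inB n (lam ! j) (q ! j)"
    and "1 \<le> i" and "i \<le> n + 1"
    and "l \<ge> sum_list lam"
    and "Tl n l q = Tinf n q"
  shows "rhoS n i q - rhoS n i (Tinf n q)
         = (\<Sum>j\<in>{1..length q}. Qf n (int i) (carriers n l q ! (j - 1)) (q ! (j - 1)))"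
proof -
  have wf: "wf_state n q"
    using assms(3) by (auto simp: wf_state_def inB_def in_set_conv_nth)
  have "lam = map sum_list q"
    by (rule nth_equalityI) (use assms(2,3) in \<open>auto simp: inB_def\<close>)
  then have size: "int (state_size q) \<le> ent n (uvec n l) 1"
    using assms(6) by (simp add: state_size_def ent_uvec_1)
  have "rhoS n i q - rhoS n i (Tinf n q)
      = (\<Sum>j\<in>{1..length q}. balls_upto n i (q ! (j - 1)) - balls_upto n i (Tinf n q ! (j - 1))
                            + balls_upto n (n + 1) (Tinf n q ! (j - 1)))"
    by (rule rhoS_diff_Tinf[OF wf])
  also have "\<dots> = (\<Sum>j\<in>{1..length q}. Qf n (int i) (carriers n l q ! (j - 1)) (q ! (j - 1)))"
    unfolding assms(7)[symmetric] Tl_def carriers_def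
    by (rule sum.cong[OF refl], rule balls_upto_sweep_nth[OF wf size _ assms(4,5)]) auto
  finally show ?thesis .
qed

end
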